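(* Let $K$ be a field of characteristic zero, let $L$ be a $K$-linear functional on $K[u]$ with moments $\mu_s=L(u^s)$, and let $(p_n(x))_{n\ge0}$ be monic polynomials over $K$ with $\deg p_n=n$ and $L(p_m p_n)=\omega_n\delta_{m,n}$, $\omega_n\neq0$ for all $n$. Write $\int f(u)\,d\mu(u)$ for $L(f)$, and put $q_n(y)=\int \frac{p_n(u)}{y-u}\,d\mu(u)$. Let $k,m,n$ be non-negative integers and $x_1,\dots,x_m$, $y_1,\dots,y_k$ variables. If $n\ge k$, then $$ \frac{\det\limits_{0\le i,j\le n-1}\left(\int u^{i+j}\frac{\prod_{\ell=1}^m(u-x_\ell)}{\prod_{\ell=1}^k(u-y_\ell)}\,d\mu(u)\right)}{\det\limits_{0\le i,j\le n-k-1}(\mu_{i+j})} =(-1)^{n(m-k)+km}\frac{\det M}{\left(\prod_{1\le i<j\le m}(x_j-x_i)\right)\left(\prod_{1\le i<j\le k}(y_i-y_j)\right)}, $$ where $M$ is the $(m+k)\times(m+k)$ matrix whose $i$-th row, for $1\le i\le m$, is $\big(p_{n-k}(x_i),p_{n-k+1}(x_i),\dots,p_{n+m-1}(x_i)\big)$ and whose $(m+i)$-th row, for $1\le i\le k$, is $\big(q_{n-k}(y_i),q_{n-k+1}(y_i),\dots,q_{n+m-1}(y_i)\big)$. If $n<k$, then $$ \det\limits_{0\le i,j\le n-1}\left(\int u^{i+j}\frac{\prod_{\ell=1}^m(u-x_\ell)}{\prod_{\ell=1}^k(u-y_\ell)}\,d\mu(u)\right) =(-1)^{n(m-k)+km}\frac{\det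 N}{\left(\prod_{1\le i<j\le m}(x_j-x_i)\right)\left(\prod_{1\le i<j\le k}(y_i-y_j)\right)}, $$ where $N$ is the $(m+k)\times(m+k)$ matrix whose $i$-th row, for $1\le i\le m$, is $\big(0,\dots,0,p_0(x_i),p_1(x_i),\dots,p_{n+m-1}(x_i)\big)$ (with $k-n$ leading zeros) and whose $(m+i)$-th row, for $1\le i\le k$, is $\big(y_i^{k-n-1},\dots,y_i^2,y_i,1,q_0(y_i),q_1(y_i),\dots,q_{n+m-1}(y_i)\big)$. Determinants of empty matrices and empty products equal $1$.
   Context: The notation $\int f(u)\,d\mu(u)$ means $L(f)$; it may be read analytically (if $L$ is given by a measure $d\mu$) or formally: expressions involving $1/(u-y)$ for a variable $y$ are interpreted by expanding $\frac{1}{u-y}=-\sum_{i\ge0}u^iy^{-i-1}$ (equivalently $\frac1{y-u}=\sum_{i\ge0}u^iy^{-i-1}$) as formal power series in $1/y$ and applying $L$ coefficientwise. In particular $q_n(y)=\sum_{i\ge0}L(u^ip_n(u))\,y^{-i-1}$ is a formal power series in $1/y$. The left-hand numerator is the Hankel determinant of the moments of the functional $p(u)\mapsto\int p(u)\frac{\prod_{\ell=1}^m(u-x_\ell)}{\prod_{\ell=1}^k(u-y_\ell)}\,d\mu(u)$. Under the orthogonality assumption the Hankel determinants $\det_{0\le i,j\le n-1}(\mu_{i+j})$ are all non-zero. *)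

theory Defs
  imports "HOL-Computational_Algebra.Formal_Laurent_Series"
          "HOL-Computational_Algebra.Polynomial"
          "Jordan_Normal_Form.Determinant"
begin

(* The formal expansions in 1/y are
   realised as formal Laurent series (type fls) in an auxiliary variable t:
   a value y with negative t-subdegree is "large", so y^(-1) has positive
   subdegree and the expansion 1/(u-y) = - sum_i u^i y^(-i-1) converges
   t-adically.  Integrands are Laurent series whose coefficients are
   polynomials in u ('a poly fls); the functional L is applied coefficientwise. *)

definition fls_cpoly :: "'a::zero fls \<Rightarrow> 'a poly fls" where
  "fls_cpoly f = Abs_fls (\<lambda>n. [: fls_nth f n :])"

definition fls_u :: "'a::{zero,one} poly fls" where
  "fls_u = fls_const [:0, 1:]"

definition inv_u_minus :: "'a::field fls \<Rightarrow> 'a poly fls" where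
  "inv_u_minus y = - (\<Sum>i. fls_u ^ i * fls_cpoly (inverse y) ^ (i + 1))"

definition inv_minus_u :: "'a::field fls \<Rightarrow> 'a poly fls" where
  "inv_minus_u y = (\<Sum>i. fls_u ^ i * fls_cpoly (inverse y) ^ (i + 1))"

definition fls_integral_L :: "('a::zero poly \<Rightarrow> 'a) \<Rightarrow> 'a poly fls \<Rightarrow> 'a fls" where
  "fls_integral_L L F = Abs_fls (\<lambda>n. if n < fls_subdegree F then 0 else L (fls_nth F n))"

definition moment :: "('a::comm_semiring_1 poly \<Rightarrow> 'a) \<Rightarrow> nat \<Rightarrow> 'a" where
  "moment L s = L (monom 1 s)"

definition q_fun :: "('a::field poly \<Rightarrow> 'a) \<Rightarrow> (nat \<Rightarrow> 'a poly) \<Rightarrow> nat \<Rightarrow> 'a fls \<Rightarrow> 'a fls" where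
  "q_fun L p n y = fls_integral_L L (fls_const (p n) * inv_minus_u y)"

definition mod_moment ::
  "('a::field poly \<Rightarrow> 'a) \<Rightarrow> nat \<Rightarrow> (nat \<Rightarrow> 'a) \<Rightarrow> nat \<Rightarrow> (nat \<Rightarrow> 'a fls) \<Rightarrow> nat \<Rightarrow> 'a fls" where
  "mod_moment L m x k y s =
     fls_integral_L L
       (fls_const (monom 1 s * (\<Prod>l\<in>{1..m}. [:- x l, 1:])) * (\<Prod>l\<in>{1..k}. inv_u_minus (y l)))"

end

(*
  The formal expansion of 1/(u - y) is a genuine inverse of u - y in K[u]((t)) (a geometric
  series in u/y), so multiplying an integrand by a factor u - y_l cancels the corresponding
  factor of the weight W = 1/prod_l (u - y_l).

  Everything is read off from one square matrix Z(G, F) of size m + max n k.  Its first m + n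
  columns belong to polynomials F_c in u: the first m rows evaluate F_c at x_1, ..., x_m, and
  the remaining rows are the pairings of F_c with polynomials G_a in u over K((t)), namely
  integral F_c G_a W d mu.  If n < k, there are k - n further columns, whose entries in the
  row of G_a are top coefficients of G_a u^j modulo prod_l (u - y_l).  A unitriangular change
  of the F_c leaves det Z unchanged, and a change of the G_a multiplies it by the determinant
  of the coefficient matrix.

  For G_a = u^a and F_c the Newton basis of x_1, ..., x_m followed by prod_l (u - x_l) u^j,
  the matrix is block triangular: a Vandermonde block in the x's, the modified Hankel matrix
  and, if n < k, a block with diagonal -1.  For F_c = p_c and G the Lagrange-type basis
  prod_(l' ~= l) (u - y_l') followed by prod_l (u - y_l) p_j, the pairings become -q_c(y_l)
  and the orthogonality relations L(p_c p_j), and the extra columns become powers of y_l;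
  a block permutation turns this into M (next to a diagonal block of the omega's, whose
  product is the Hankel determinant of order n - k) or N.  The change of row basis
  contributes the Vandermonde determinant in the y's.
*)

theory Submission
  imports Defs
begin

section \<open>Convergence of Laurent series\<close>

definition fls_vanishes_below :: "'b::zero fls \<Rightarrow> int \<Rightarrow> bool" where
  "fls_vanishes_below f a \<longleftrightarrow> (\<forall>i<a. fls_nth f i = 0)"

lemma fls_vanishes_below_subdegree: "fls_vanishes_below f (fls_subdegree f)"
  by (simp add: fls_vanishes_below_def)

lemma fls_vanishes_below_mono: "fls_vanishes_below f a \<Longrightarrow> b \<le> a \<Longrightarrow> fls_vanishes_below f b"
  by (simp add: fls_vanishes_below_def)

lemma fls_vanishes_below_le_subdegree:
  "fls_vanishes_below f a \<Longrightarrow> f \<noteq> 0 \<Longrightarrow> a \<le> fls_subdegree f"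
  by (intro fls_subdegree_geI) (auto simp: fls_vanishes_below_def)

lemma fls_times_nth_vanishes_below:
  fixes f g :: "'b::comm_semiring_0 fls"
  assumes "fls_vanishes_below f a" "fls_vanishes_below g b"
  shows "fls_nth (f * g) n = (\<Sum>i=a..n-b. fls_nth f i * fls_nth g (n - i))"
proof (cases "f = 0 \<or> g = 0")
  case False
  then have fa: "a \<le> fls_subdegree f" and gb: "b \<le> fls_subdegree g"
    using assms fls_vanishes_below_le_subdegree by blast+
  have "fls_nth (f * g) n =
      (\<Sum>i=fls_subdegree f..n - fls_subdegree g. fls_nth f i * fls_nth g (n - i))"
    by (rule fls_times_nth(2))
  also have "\<dots> = (\<Sum>i=a..n-b. fls_nth f i * fls_nth g (n - i))"
    by (rule sum.mono_neutral_left) (use fa gb in auto)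
  finally show ?thesis .
qed auto

lemma fls_vanishes_below_mult:
  fixes f g :: "'b::comm_semiring_0 fls"
  assumes "fls_vanishes_below f a" "fls_vanishes_below g b"
  shows "fls_vanishes_below (f * g) (a + b)"
  using assms by (simp add: fls_vanishes_below_def fls_times_nth_vanishes_below)

lemma fls_vanishes_below_power:
  fixes f :: "'b::comm_semiring_1 fls"
  assumes "fls_vanishes_below f a"
  shows "fls_vanishes_below (f ^ N) (int N * a)"
proof (induction N)
  case (Suc N)
  show ?case
    using fls_vanishes_below_mult[OF assms Suc] by (simp add: algebra_simps)
qed (simp add: fls_vanishes_below_def)

lemma fls_dist_le_if_vanishes_below:
  fixes f g :: "'b::group_add fls"
  assumes "fls_vanishes_below (f - g) (int M)"
  shows "dist f g \<le> inverse (2 ^ M)"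
proof (cases "f = g")
  case False
  then have "int M \<le> fls_subdegree (f - g)"
    using fls_vanishes_below_le_subdegree[OF assms] by simp
  then show ?thesis
    using False by (auto simp: dist_fls_def intro!: le_imp_inverse_le power_increasing)
qed simp

lemma fls_vanishes_below_if_dist_less:
  fixes f g :: "'b::group_add fls"
  assumes "dist f g < inverse (2 ^ M)"
  shows "fls_vanishes_below (f - g) (int M)"
proof (cases "f = g")
  case False
  have "int M \<le> fls_subdegree (f - g)"
  proof (cases "fls_subdegree (f - g) \<ge> 0")
    case True
    then have "inverse (2 ^ nat (fls_subdegree (f - g))) < (inverse (2 ^ M) :: real)"
      using assms False by (simp add: dist_fls_def)
    then have "M < nat (fls_subdegree (f - g))"
      by (simp add: inverse_less_iff_less)
    then show ?thesis by linarith
  next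
    case False
    then have "dist f g \<ge> 1"
      using \<open>f \<noteq> g\<close> by (simp add: dist_fls_def)
    moreover have "inverse (2 ^ M) \<le> (1 :: real)" by (simp add: inverse_le_1_iff)
    ultimately show ?thesis using assms by linarith
  qed
  then show ?thesis
    using fls_vanishes_below_mono[OF fls_vanishes_below_subdegree] by blast
qed (simp add: fls_vanishes_below_def)

lemma fls_tendsto_iff_vanishes_below:
  fixes X :: "nat \<Rightarrow> 'b::group_add fls"
  shows "X \<longlonglongrightarrow> s \<longleftrightarrow> (\<forall>M. \<forall>\<^sub>F n in sequentially. fls_vanishes_below (X n - s) (int M))"
proof
  assume "X \<longlonglongrightarrow> s"
  show "\<forall>M. \<forall>\<^sub>F n in sequentially. fls_vanishes_below (X n - s) (int M)"
  proof
    fix M :: nat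
    have "\<forall>\<^sub>F n in sequentially. dist (X n) s < inverse (2 ^ M)"
      using \<open>X \<longlonglongrightarrow> s\<close> by (rule tendstoD) simp
    then show "\<forall>\<^sub>F n in sequentially. fls_vanishes_below (X n - s) (int M)"
      by (rule eventually_mono) (rule fls_vanishes_below_if_dist_less)
  qed
next
  assume vanish: "\<forall>M. \<forall>\<^sub>F n in sequentially. fls_vanishes_below (X n - s) (int M)"
  show "X \<longlonglongrightarrow> s"
  proof (rule tendstoI)
    fix e :: real assume "e > 0"
    obtain M :: nat where "inverse e < 2 ^ M"
      using real_arch_pow[of 2 "inverse e"] by auto
    then have "inverse (2 ^ M) < e"
      using \<open>e > 0\<close> by (simp add: field_simps)
    have "\<forall>\<^sub>F n in sequentially. fls_vanishes_below (X n - s) (int M)"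
      using vanish by blast
    then show "\<forall>\<^sub>F n in sequentially. dist (X n) s < e"
    proof (rule eventually_mono)
      fix n assume "fls_vanishes_below (X n - s) (int M)"
      then have "dist (X n) s \<le> inverse (2 ^ M)"
        by (rule fls_dist_le_if_vanishes_below)
      then show "dist (X n) s < e"
        using \<open>inverse (2 ^ M) < e\<close> by linarith
    qed
  qed
qed

lemma fls_tendsto_mult_left:
  fixes X :: "nat \<Rightarrow> 'b::comm_ring fls"
  assumes "X \<longlonglongrightarrow> s"
  shows "(\<lambda>n. c * X n) \<longlonglongrightarrow> c * s"
  unfolding fls_tendsto_iff_vanishes_below
proof
  fix M
  define M' where "M' = nat (int M - fls_subdegree c)"
  have "\<forall>\<^sub>F n in sequentially. fls_vanishes_below (X n - s) (int M')"
    using assms by (simp add: fls_tendsto_iff_vanishes_below)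
  then show "\<forall>\<^sub>F n in sequentially. fls_vanishes_below (c * X n - c * s) (int M)"
  proof (rule eventually_mono)
    fix n assume "fls_vanishes_below (X n - s) (int M')"
    from fls_vanishes_below_mult[OF fls_vanishes_below_subdegree this]
    have "fls_vanishes_below (c * (X n - s)) (int M)"
      by (rule fls_vanishes_below_mono) (simp add: M'_def)
    then show "fls_vanishes_below (c * X n - c * s) (int M)"
      by (simp add: right_diff_distrib)
  qed
qed

lemma fls_sums_mult_left:
  fixes f :: "nat \<Rightarrow> 'b::comm_ring fls"
  shows "f sums s \<Longrightarrow> (\<lambda>i. c * f i) sums (c * s)"
  unfolding sums_def by (simp add: sum_distrib_left[symmetric] fls_tendsto_mult_left)

definition fls_series_lim :: "(nat \<Rightarrow> 'b::comm_monoid_add fls) \<Rightarrow> 'b fls" where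
  "fls_series_lim t = Abs_fls (\<lambda>n. \<Sum>i\<le>nat n. fls_nth (t i) n)"

lemma sums_fls_series_lim:
  fixes t :: "nat \<Rightarrow> 'b::ab_group_add fls"
  assumes t: "\<And>i. fls_vanishes_below (t i) (int i)"
  shows "t sums fls_series_lim t"
proof -
  have t0: "fls_nth (t i) n = 0" if "n < int i" for i n
    using t[of i] that by (simp add: fls_vanishes_below_def)
  have lim_nth: "fls_nth (fls_series_lim t) n = (\<Sum>i\<le>nat n. fls_nth (t i) n)" for n
    unfolding fls_series_lim_def by (rule nth_Abs_fls_lower_bound[of 0]) (simp add: t0)
  have partial: "fls_vanishes_below ((\<Sum>i<N. t i) - fls_series_lim t) (int N)" for N
    unfolding fls_vanishes_below_def
  proof (intro allI impI)
    fix n assume "n < int N"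
    have "(\<Sum>i<N. fls_nth (t i) n) = (\<Sum>i\<le>nat n. fls_nth (t i) n)"
    proof (cases "n < 0")
      case True
      then show ?thesis by (simp add: t0)
    next
      case False
      show ?thesis
      proof (rule sum.mono_neutral_right)
        show "{..nat n} \<subseteq> {..<N}" using False \<open>n < int N\<close> by auto
        show "\<forall>i\<in>{..<N} - {..nat n}. fls_nth (t i) n = 0" using False by (auto intro: t0)
      qed simp
    qed
    then show "fls_nth ((\<Sum>i<N. t i) - fls_series_lim t) n = 0"
      by (simp add: fls_nth_sum lim_nth)
  qed
  then have "\<forall>\<^sub>F N in sequentially.
      fls_vanishes_below ((\<Sum>i<N. t i) - fls_series_lim t) (int M)" for M
    by (intro eventually_sequentiallyI[of M] fls_vanishes_below_mono[OF partial]) simp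
  then show ?thesis
    unfolding sums_def fls_tendsto_iff_vanishes_below by blast
qed

lemma fls_geometric_series:
  fixes z :: "'b::comm_ring_1 fls"
  assumes "fls_vanishes_below z 1"
  shows "summable (\<lambda>i. z ^ i)" and "(1 - z) * (\<Sum>i. z ^ i) = 1"
proof -
  have pow: "fls_vanishes_below (z ^ i) (int i)" for i
    using fls_vanishes_below_power[OF assms, of i] by simp
  then show "summable (\<lambda>i. z ^ i)"
    using sums_fls_series_lim sums_summable by blast
  then have "(\<lambda>N. (1 - z) * (\<Sum>i<N. z ^ i)) \<longlonglongrightarrow> (1 - z) * (\<Sum>i. z ^ i)"
    by (intro fls_tendsto_mult_left) (simp add: summable_LIMSEQ)
  moreover have "(\<lambda>N. (1 - z) * (\<Sum>i<N. z ^ i)) \<longlonglongrightarrow> 1"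
    unfolding one_diff_power_eq[symmetric] fls_tendsto_iff_vanishes_below
  proof
    fix M
    show "\<forall>\<^sub>F N in sequentially. fls_vanishes_below (1 - z ^ N - 1) (int M)"
    proof (rule eventually_sequentiallyI)
      fix N assume "M \<le> N"
      then show "fls_vanishes_below (1 - z ^ N - 1) (int M)"
        using pow[of N] by (simp add: fls_vanishes_below_def)
    qed
  qed
  ultimately show "(1 - z) * (\<Sum>i. z ^ i) = 1"
    by (rule LIMSEQ_unique)
qed

section \<open>Laurent series of polynomials and the expansion of \<open>1/(u - y)\<close>\<close>

lemma fls_nth_cpoly: "fls_nth (fls_cpoly c) n = [: fls_nth c n :]"
proof -
  obtain N where "\<forall>n<N. fls_nth c n = 0" by (rule fls_nth_vanishes_belowE)
  then show ?thesis
    unfolding fls_cpoly_def by (intro nth_Abs_fls_lower_bound[of N]) auto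
qed

lemma fls_vanishes_below_cpoly: "fls_vanishes_below c a \<Longrightarrow> fls_vanishes_below (fls_cpoly c) a"
  by (simp add: fls_vanishes_below_def fls_nth_cpoly)

lemma fls_cpoly_eq_0_iff [simp]: "fls_cpoly c = 0 \<longleftrightarrow> c = 0"
proof
  assume "fls_cpoly c = 0"
  then show "c = 0"
    by (metis fls_eqI fls_nth_cpoly fls_zero_nth pCons_eq_0_iff)
qed (simp add: fls_eqI fls_nth_cpoly)

lemma fls_cpoly_add: "fls_cpoly (a + b) = fls_cpoly a + fls_cpoly b"
  by (rule fls_eqI) (simp add: fls_nth_cpoly)

lemma fls_cpoly_uminus: "fls_cpoly (- a) = - fls_cpoly (a :: 'b::ab_group_add fls)"
  by (rule fls_eqI) (simp add: fls_nth_cpoly)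

lemma fls_cpoly_const: "fls_cpoly (fls_const c) = fls_const [:c:]"
  by (rule fls_eqI) (simp add: fls_nth_cpoly)

lemma fls_cpoly_1 [simp]: "fls_cpoly 1 = 1"
  by (metis fls_const_1 fls_cpoly_const one_pCons)

lemma fls_cpoly_mult: "fls_cpoly (a * b) = fls_cpoly a * fls_cpoly (b :: 'b::comm_ring_1 fls)"
proof (rule fls_eqI)
  fix n
  let ?a = "fls_subdegree a" and ?b = "fls_subdegree b"
  have "fls_vanishes_below (fls_cpoly a) ?a" "fls_vanishes_below (fls_cpoly b) ?b"
    by (intro fls_vanishes_below_cpoly fls_vanishes_below_subdegree)+
  then have "fls_nth (fls_cpoly a * fls_cpoly b) n =
      (\<Sum>i=?a..n-?b. [:fls_nth a i:] * [:fls_nth b (n - i):])"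
    by (simp add: fls_times_nth_vanishes_below fls_nth_cpoly)
  also have "\<dots> = (\<Sum>i=?a..n-?b. [:fls_nth a i * fls_nth b (n - i):])"
    by (simp add: mult.commute)
  also have "\<dots> = [:\<Sum>i=?a..n-?b. fls_nth a i * fls_nth b (n - i):]"
    by (rule sum_to_poly)
  also have "\<dots> = fls_nth (fls_cpoly (a * b)) n"
    by (simp add: fls_nth_cpoly fls_times_nth(2))
  finally show "fls_nth (fls_cpoly (a * b)) n = fls_nth (fls_cpoly a * fls_cpoly b) n" ..
qed

lemma fls_u_vanishes_below: "fls_vanishes_below (fls_u :: 'b::{zero,one} poly fls) 0"
  by (simp add: fls_u_def fls_vanishes_below_def)

lemma fls_u_power: "fls_u ^ i = fls_const (monom 1 i)"
  by (simp add: fls_u_def fls_const_power monom_altdef)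

lemma inv_minus_u_eq: "inv_minus_u y = - inv_u_minus y"
  by (simp add: inv_minus_u_def inv_u_minus_def)

lemma inv_u_minus_mult:
  fixes y :: "'a::field fls"
  assumes "fls_subdegree y < 0"
  shows "inv_u_minus y * (fls_u - fls_cpoly y) = 1"
proof -
  define c where "c = fls_cpoly (inverse y)"
  define S where "S = (\<Sum>i. (fls_u * c) ^ i)"
  have "fls_vanishes_below c 1"
    unfolding c_def using assms
    by (intro fls_vanishes_below_cpoly fls_vanishes_below_mono[OF fls_vanishes_below_subdegree])
        simp
  then have "fls_vanishes_below (fls_u * c) 1"
    using fls_vanishes_below_mult[OF fls_u_vanishes_below] by fastforce
  note geometric = fls_geometric_series[OF this, folded S_def]
  have "(\<lambda>i. fls_u ^ i * c ^ (i + 1)) sums (c * S)"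
    using fls_sums_mult_left[OF summable_sums[OF geometric(1)], of c]
    by (simp add: S_def power_mult_distrib ac_simps)
  then have inv: "inv_u_minus y = - (c * S)"
    unfolding inv_u_minus_def c_def[symmetric] by (simp add: sums_iff)
  have "y \<noteq> 0"
    using assms by auto
  then have "c * fls_cpoly y = 1"
    by (simp add: c_def fls_cpoly_mult[symmetric])
  then have "- (c * S) * (fls_u - fls_cpoly y) = (1 - fls_u * c) * S"
    by (simp add: algebra_simps)
  then show ?thesis
    using geometric(2) inv by simp
qed

definition fls_poly_embed :: "'a::field fls poly \<Rightarrow> 'a poly fls" where
  "fls_poly_embed g = poly (map_poly fls_cpoly g) fls_u"

lemma fls_poly_embed_pCons: "fls_poly_embed (pCons a g) = fls_cpoly a + fls_u * fls_poly_embed g"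
  by (simp add: fls_poly_embed_def map_poly_pCons)

lemma fls_poly_embed_0 [simp]: "fls_poly_embed 0 = 0"
  by (simp add: fls_poly_embed_def)

lemma fls_poly_embed_add: "fls_poly_embed (g + h) = fls_poly_embed g + fls_poly_embed h"
proof -
  have "map_poly fls_cpoly (g + h) = map_poly fls_cpoly g + map_poly fls_cpoly h"
    by (rule poly_eqI) (simp add: coeff_map_poly fls_cpoly_add)
  then show ?thesis by (simp add: fls_poly_embed_def)
qed

lemma fls_poly_embed_smult:
  "fls_poly_embed (Polynomial.smult a g) = fls_cpoly a * fls_poly_embed g"
proof -
  have "map_poly fls_cpoly (Polynomial.smult a g)
      = Polynomial.smult (fls_cpoly a) (map_poly fls_cpoly g)"
    by (rule map_poly_smult) (simp_all add: fls_cpoly_mult)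
  then show ?thesis by (simp add: fls_poly_embed_def)
qed

lemma fls_poly_embed_mult: "fls_poly_embed (g * h) = fls_poly_embed g * fls_poly_embed h"
proof (induction g)
  case (pCons a g)
  have "fls_poly_embed (pCons a g * h) = fls_poly_embed (Polynomial.smult a h + pCons 0 (g * h))"
    by simp
  also have "\<dots> = fls_cpoly a * fls_poly_embed h + fls_u * (fls_poly_embed g * fls_poly_embed h)"
    by (simp add: fls_poly_embed_add fls_poly_embed_smult fls_poly_embed_pCons pCons.IH)
  also have "\<dots> = fls_poly_embed (pCons a g) * fls_poly_embed h"
    by (simp add: fls_poly_embed_pCons algebra_simps)
  finally show ?case .
qed simp

lemma fls_poly_embed_1 [simp]: "fls_poly_embed 1 = 1"
  by (simp add: one_pCons fls_poly_embed_pCons)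

lemma fls_poly_embed_prod: "fls_poly_embed (\<Prod>i\<in>S. f i) = (\<Prod>i\<in>S. fls_poly_embed (f i))"
  by (induction S rule: infinite_finite_induct) (simp_all add: fls_poly_embed_mult)

lemma fls_poly_embed_linear: "fls_poly_embed [:- c, 1:] = fls_u - fls_cpoly c"
  by (simp add: fls_poly_embed_pCons fls_cpoly_uminus)

lemma fls_poly_embed_monom: "fls_poly_embed (monom a i) = fls_cpoly a * fls_u ^ i"
  by (simp add: fls_poly_embed_def map_poly_monom poly_monom)

lemma fls_poly_embed_eq_sum:
  assumes "degree g < N"
  shows "fls_poly_embed g = (\<Sum>i<N. fls_cpoly (coeff g i) * fls_u ^ i)"
proof -
  have "degree (map_poly fls_cpoly g) = degree g"
    by (rule degree_map_poly) simp
  then have "fls_poly_embed g = (\<Sum>i\<le>degree g. fls_cpoly (coeff g i) * fls_u ^ i)"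
    unfolding fls_poly_embed_def by (simp add: poly_altdef coeff_map_poly)
  also have "\<dots> = (\<Sum>i<N. fls_cpoly (coeff g i) * fls_u ^ i)"
    by (rule sum.mono_neutral_left) (use assms in \<open>auto simp: coeff_eq_0\<close>)
  finally show ?thesis .
qed

lemma fls_poly_embed_map_const: "fls_poly_embed (map_poly fls_const f) = fls_const f"
proof (induction f)
  case (pCons a f)
  have "fls_poly_embed (map_poly fls_const (pCons a f)) = fls_const [:a:] + fls_u * fls_const f"
    by (simp add: map_poly_pCons fls_poly_embed_pCons pCons.IH fls_cpoly_const)
  also have "\<dots> = fls_const (pCons a f)"
    by (simp add: fls_u_def fls_plus_const)
  finally show ?case .
qed simp

section \<open>Linear functionals applied coefficientwise\<close>

locale poly_functional =
  fixes L :: "'a::field poly \<Rightarrow> 'a"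
  assumes L_add: "\<And>f g. L (f + g) = L f + L g"
    and L_smult: "\<And>c f. L (Polynomial.smult c f) = c * L f"
begin

lemma L_0 [simp]: "L 0 = 0"
  using L_smult[of 0 0] by simp

lemma L_sum: "L (\<Sum>i\<in>S. f i) = (\<Sum>i\<in>S. L (f i))"
  by (induction S rule: infinite_finite_induct) (simp_all add: L_add)

abbreviation I :: "'a poly fls \<Rightarrow> 'a fls" where
  "I \<equiv> fls_integral_L L"

lemma fls_nth_I: "fls_nth (I F) n = L (fls_nth F n)"
  unfolding fls_integral_L_def
  by (subst nth_Abs_fls_lower_bound[of "fls_subdegree F"]) auto

lemma I_add: "I (F + G) = I F + I G"
  by (rule fls_eqI) (simp add: fls_nth_I L_add)

lemma I_uminus: "I (- F) = - I F"
  by (rule fls_eqI) (simp add: fls_nth_I L_smult[of "- 1", simplified])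

lemma I_sum: "I (\<Sum>i\<in>S. F i) = (\<Sum>i\<in>S. I (F i))"
  by (induction S rule: infinite_finite_induct) (simp_all add: I_add fls_eqI fls_nth_I)

lemma I_const: "I (fls_const f) = fls_const (L f)"
  by (rule fls_eqI) (simp add: fls_nth_I)

lemma I_cpoly_mult: "I (fls_cpoly c * F) = c * I F"
proof (rule fls_eqI)
  fix n
  obtain a where "\<forall>n<a. fls_nth c n = 0" by (rule fls_nth_vanishes_belowE)
  then have c: "fls_vanishes_below c a" by (simp add: fls_vanishes_below_def)
  have F: "fls_vanishes_below F (fls_subdegree F)" by (rule fls_vanishes_below_subdegree)
  then have IF: "fls_vanishes_below (I F) (fls_subdegree F)"
    by (simp add: fls_vanishes_below_def fls_nth_I)
  have "fls_nth (I (fls_cpoly c * F)) n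
      = L (\<Sum>i=a..n-fls_subdegree F. [:fls_nth c i:] * fls_nth F (n - i))"
    by (simp add: fls_nth_I fls_times_nth_vanishes_below[OF fls_vanishes_below_cpoly[OF c] F]
        fls_nth_cpoly)
  also have "\<dots> = (\<Sum>i=a..n-fls_subdegree F. fls_nth c i * fls_nth (I F) (n - i))"
    by (simp add: L_sum L_smult fls_nth_I)
  also have "\<dots> = fls_nth (c * I F) n"
    by (simp add: fls_times_nth_vanishes_below[OF c IF])
  finally show "fls_nth (I (fls_cpoly c * F)) n = fls_nth (c * I F) n" .
qed

lemma I_const_mult: "I (fls_const [:a:] * F) = fls_const a * I F"
  using I_cpoly_mult[of "fls_const a" F] by (simp add: fls_cpoly_const)

end

section \<open>Products, polynomials and determinants\<close>

lemma (in comm_monoid_set) lessThan_add: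
  "F g {..<m + n} = F g {..<m} \<^bold>* F (\<lambda>i. g (m + i)) {..<n :: nat}"
  by (induction n) (simp_all add: assoc)

lemma fls_const_sum: "fls_const (\<Sum>i\<in>S. f i) = (\<Sum>i\<in>S. fls_const (f i))"
  by (induction S rule: infinite_finite_induct) (simp_all flip: fls_plus_const)

lemma fls_const_prod: "fls_const (\<Prod>i\<in>S. f i) = (\<Prod>i\<in>S. fls_const (f i :: 'b::comm_ring_1))"
  by (induction S rule: infinite_finite_induct) (simp_all flip: fls_const_mult_const)

lemma prod_atLeast1_lessThan_reindex:
  "(\<Prod>j\<in>{1..N}. \<Prod>i\<in>{1..<j}. g i j) = (\<Prod>a<N. \<Prod>l<a. g (Suc l) (Suc a))"
proof -
  have "{1..<Suc a} = Suc ` {..<a}" for a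
    by (simp add: image_Suc_lessThan atLeastLessThanSuc_atLeastAtMost)
  then show ?thesis
    by (simp add: prod.atLeast1_atMost_eq prod.reindex)
qed

lemma prod_triangle_swap:
  "(\<Prod>j\<in>{1..N}. \<Prod>l\<in>{j<..N}. g j l) = (\<Prod>l\<in>{1..N}. \<Prod>j\<in>{1..<l}. g j (l::nat))"
proof -
  have "(\<Prod>j\<in>{1..N}. \<Prod>l\<in>{l. l \<in> {1..N} \<and> j < l}. g j l) =
        (\<Prod>l\<in>{1..N}. \<Prod>j\<in>{j. j \<in> {1..N} \<and> j < l}. g j l)"
    by (rule prod.swap_restrict) auto
  moreover have "{l. l \<in> {1..N} \<and> j < l} = {j<..N}" if "j \<in> {1..N}" for j
    using that by auto
  moreover have "{j. j \<in> {1..N} \<and> j < l} = {1..<l}" if "l \<in> {1..N}" for l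
    using that by auto
  ultimately show ?thesis by simp
qed

lemma prod_atLeast1_atMost_remove:
  assumes "j \<in> {1..N}"
  shows "(\<Prod>l\<in>{1..N} - {j}. f l) = (\<Prod>l\<in>{1..<j}. f l) * (\<Prod>l\<in>{j<..N}. f (l::nat))"
proof -
  have "{1..N} - {j} = {1..<j} \<union> {j<..N}"
    using assms by auto
  then have "(\<Prod>l\<in>{1..N} - {j}. f l) = (\<Prod>l\<in>{1..<j} \<union> {j<..N}. f l)"
    by (simp only:)
  also have "\<dots> = (\<Prod>l\<in>{1..<j}. f l) * (\<Prod>l\<in>{j<..N}. f l)"
    by (rule prod.union_disjoint) auto
  finally show ?thesis .
qed

lemma neg_one_power_int_eq_neg_one_power:
  assumes "even (z - int N)"
  shows "(- 1 :: 'b::field) powi z = (- 1) ^ N"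
proof -
  have "even z \<longleftrightarrow> even N"
    using assms by (metis diff_add_cancel even_add even_of_nat)
  moreover have "(- 1 :: 'b) powi z = (if even z then 1 else - 1)"
    by (cases "z \<ge> 0") (simp_all add: power_int_def even_nat_iff)
  ultimately show ?thesis by simp
qed

lemma neg_one_powi_exponent_ge:
  assumes "k \<le> n"
  shows "(- 1 :: 'b::field) powi (int n * (int m - int k) + int k * int m)
    = (- 1) ^ ((n - k) * (m + k)) * (- 1) ^ k"
proof -
  have "int ((n - k) * (m + k) + k) = (int n - int k) * (int m + int k) + int k"
    by (simp only: of_nat_add of_nat_mult of_nat_diff[OF assms])
  then have "int n * (int m - int k) + int k * int m - int ((n - k) * (m + k) + k)
      = 2 * (int k * int m - int n * int k) + int k * (int k - 1)"
    by (simp add: algebra_simps)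
  then have "even (int n * (int m - int k) + int k * int m - int ((n - k) * (m + k) + k))"
    by (simp only:) simp
  then have "(- 1 :: 'b) powi (int n * (int m - int k) + int k * int m)
      = (- 1) ^ ((n - k) * (m + k) + k)"
    by (rule neg_one_power_int_eq_neg_one_power)
  then show ?thesis
    by (simp add: power_add)
qed

lemma neg_one_powi_exponent_lt:
  assumes "n < k"
  shows "(- 1 :: 'b::field) powi (int n * (int m - int k) + int k * int m)
    = (- 1) ^ ((k - n) * (m + n)) * (- 1) ^ k * (- 1) ^ (k - n)"
proof -
  have "int ((k - n) * (m + n) + k + (k - n))
      = (int k - int n) * (int m + int n) + int k + (int k - int n)"
    using assms by (simp only: of_nat_add of_nat_mult of_nat_diff[OF less_imp_le])
  then have "int n * (int m - int k) + int k * int m - int ((k - n) * (m + n) + k + (k - n))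
      = 2 * (int n * int m - int n * int k - int k) + int n * (int n + 1)"
    by (simp add: algebra_simps)
  then have "even (int n * (int m - int k) + int k * int m - int ((k - n) * (m + n) + k + (k - n)))"
    by (simp only:) simp
  then have "(- 1 :: 'b) powi (int n * (int m - int k) + int k * int m)
      = (- 1) ^ ((k - n) * (m + n) + k + (k - n))"
    by (rule neg_one_power_int_eq_neg_one_power)
  then show ?thesis
    by (simp add: power_add)
qed

lemma poly_eq_sum_monom_lessThan:
  assumes "degree f < N"
  shows "f = (\<Sum>j<N. monom (coeff f j) j)"
proof -
  have "f = (\<Sum>j\<le>N - 1. monom (coeff f j) j)"
    using assms by (intro poly_as_sum_of_monoms'[symmetric]) simp
  also have "{..N - 1} = {..<N}" using assms by auto
  finally show ?thesis .
qed

lemma poly_eq_sum_lessThan: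
  fixes f :: "'b::comm_ring_1 poly"
  assumes "degree f < N"
  shows "poly f z = (\<Sum>j<N. coeff f j * z ^ j)"
  by (subst poly_eq_sum_monom_lessThan[OF assms]) (simp add: poly_sum poly_monom)

lemma mult_eq_sum_smult_monom_mult:
  fixes f :: "'b::comm_ring_1 poly"
  assumes "degree f < N"
  shows "f * g = (\<Sum>j<N. Polynomial.smult (coeff f j) (monom 1 j * g))"
  by (subst poly_eq_sum_monom_lessThan[OF assms])
    (simp add: sum_distrib_right smult_monom flip: mult_smult_left)

lemma sum_mod_poly_left: "(\<Sum>i\<in>S. f i) mod (q :: 'b::field poly) = (\<Sum>i\<in>S. f i mod q)"
  by (induction S rule: infinite_finite_induct) (simp_all add: poly_mod_add_left)

lemma degree_prod_linear:
  fixes c :: "'i \<Rightarrow> 'b::idom"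
  assumes "finite S"
  shows "degree (\<Prod>l\<in>S. [:- c l, 1:]) = card S"
  using assms by (subst degree_prod_sum_eq) auto

lemma lead_coeff_prod_linear: "lead_coeff (\<Prod>l\<in>S. [:- c l, 1:]) = (1 :: 'b::idom)"
  by (simp add: lead_coeff_prod)

lemma poly_prod_linear_eq_0:
  "finite S \<Longrightarrow> a \<in> S \<Longrightarrow> poly (\<Prod>l\<in>S. [:- c l, 1:]) (c a) = (0 :: 'b::idom)"
  by (auto simp: poly_prod prod_zero_iff)

lemma index_mat_mult_mat:
  "i < nr \<Longrightarrow> j < nc \<Longrightarrow> (mat nr q f * mat q nc g) $$ (i, j) = (\<Sum>a<q. f (i, a) * g (a, j))"
  by (simp add: scalar_prod_def atLeast0LessThan)

lemma det_mat_lower_triangular: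
  assumes "\<And>i j. i < j \<Longrightarrow> j < N \<Longrightarrow> g i j = 0"
  shows "det (mat N N (\<lambda>(i, j). g i j)) = (\<Prod>i<N. g i i)"
proof -
  have "det (mat N N (\<lambda>(i, j). g i j)) = prod_list (diag_mat (mat N N (\<lambda>(i, j). g i j)))"
    by (rule det_lower_triangular[of N]) (use assms in auto)
  then show ?thesis by (simp add: prod_list_diag_prod atLeast0LessThan)
qed

lemma det_mat_upper_triangular:
  assumes "\<And>i j. j < i \<Longrightarrow> i < N \<Longrightarrow> g i j = 0"
  shows "det (mat N N (\<lambda>(i, j). g i j)) = (\<Prod>i<N. g i i)"
proof -
  have "det (mat N N (\<lambda>(i, j). g i j)) = prod_list (diag_mat (mat N N (\<lambda>(i, j). g i j)))"
    by (rule det_upper_triangular[of _ N]) (use assms in \<open>auto simp: upper_triangular_def\<close>)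
  then show ?thesis by (simp add: prod_list_diag_prod atLeast0LessThan)
qed

lemma det_mat_block_lower_triangular:
  fixes g :: "nat \<Rightarrow> nat \<Rightarrow> 'b::idom"
  assumes "\<And>i j. i < a \<Longrightarrow> a \<le> j \<Longrightarrow> j < a + b \<Longrightarrow> g i j = 0"
  shows "det (mat (a + b) (a + b) (\<lambda>(i, j). g i j))
    = det (mat a a (\<lambda>(i, j). g i j)) * det (mat b b (\<lambda>(i, j). g (a + i) (a + j)))"
proof -
  let ?UL = "mat a a (\<lambda>(i, j). g i j)"
  let ?LL = "mat b a (\<lambda>(i, j). g (a + i) j)"
  let ?LR = "mat b b (\<lambda>(i, j). g (a + i) (a + j))"
  have "mat (a + b) (a + b) (\<lambda>(i, j). g i j) = four_block_mat ?UL (0\<^sub>m a b) ?LL ?LR"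
    by (rule eq_matI) (use assms in \<open>auto simp: not_less\<close>)
  then show ?thesis
    using det_four_block_mat_upper_right_zero[of ?UL a "0\<^sub>m a b" b ?LL ?LR] by simp
qed

lemma det_mat_scale_rows:
  fixes s :: "nat \<Rightarrow> 'b::idom"
  shows "det (mat N N (\<lambda>(i, j). s i * f (i, j))) = (\<Prod>i<N. s i) * det (mat N N f)"
proof -
  let ?D = "mat N N (\<lambda>(i, j). if i = j then s i else 0)"
  have "?D * mat N N f = mat N N (\<lambda>(i, j). s i * f (i, j))"
  proof (rule eq_matI)
    fix i j assume "i < dim_row (mat N N (\<lambda>(i, j). s i * f (i, j)))"
      and "j < dim_col (mat N N (\<lambda>(i, j). s i * f (i, j)))"
    then have ij: "i < N" "j < N" by simp_all
    have "(?D * mat N N f) $$ (i, j) = (\<Sum>a<N. (if i = a then s i else 0) * f (a, j))"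
      using ij by (simp add: scalar_prod_def atLeast0LessThan)
    also have "\<dots> = (\<Sum>a<N. if a = i then s i * f (i, j) else 0)"
      by (rule sum.cong) auto
    finally show "(?D * mat N N f) $$ (i, j) = mat N N (\<lambda>(i, j). s i * f (i, j)) $$ (i, j)"
      using ij by simp
  qed simp_all
  moreover have "det (?D * mat N N f) = det ?D * det (mat N N f)"
    by (rule det_mult) auto
  moreover have "det ?D = (\<Prod>i<N. s i)"
    by (subst det_mat_lower_triangular) auto
  ultimately show ?thesis by simp
qed

lemma det_mat_negate_rows_from:
  fixes A :: "'b::idom mat"
  assumes "A \<in> carrier_mat (a + b) (a + b)"
  shows "det (mat (a + b) (a + b) (\<lambda>(i, j). (if i < a then 1 else - 1) * A $$ (i, j)))
    = (- 1) ^ b * det A"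
proof -
  have "mat (a + b) (a + b) (\<lambda>(i, j). A $$ (i, j)) = A"
    using assms by (intro eq_matI) auto
  then show ?thesis
    using det_mat_scale_rows[where s = "\<lambda>i. if i < a then 1 else - 1" and N = "a + b"
        and f = "\<lambda>(i, j). A $$ (i, j)"]
    by (simp add: case_prod_beta prod.lessThan_add)
qed

lemma coeff_mat_mult_power_mat:
  fixes F :: "nat \<Rightarrow> 'b::comm_ring_1 poly"
  assumes "\<And>a. a < N \<Longrightarrow> degree (F a) < N"
  shows "mat N N (\<lambda>(a, i). coeff (F a) i) * mat N N (\<lambda>(i, s). z s ^ i)
    = mat N N (\<lambda>(a, s). poly (F a) (z s))"
  by (rule eq_matI) (auto simp: scalar_prod_def atLeast0LessThan poly_eq_sum_lessThan[OF assms])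

lemma det_coeff_mat_monic:
  fixes F :: "nat \<Rightarrow> 'b::comm_ring_1 poly"
  assumes "\<And>i. i < N \<Longrightarrow> degree (F i) = i" and "\<And>i. i < N \<Longrightarrow> lead_coeff (F i) = 1"
  shows "det (mat N N (\<lambda>(i, j). coeff (F i) j)) = 1"
    and "det (mat N N (\<lambda>(j, i). coeff (F i) j)) = 1"
  using assms
  by (simp_all add: det_mat_lower_triangular det_mat_upper_triangular coeff_eq_0)

lemma det_vandermonde:
  fixes z :: "nat \<Rightarrow> 'b::idom"
  shows "det (mat N N (\<lambda>(i, s). z s ^ i)) = (\<Prod>a<N. \<Prod>l<a. z a - z l)"
proof -
  define newton where "newton a = (\<Prod>l<a. [:- z l, 1:])" for a
  have deg: "degree (newton a) = a" for a
    by (simp add: newton_def degree_prod_linear)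
  have lead: "lead_coeff (newton a) = 1" for a
    unfolding newton_def by (rule lead_coeff_prod_linear)
  let ?C = "mat N N (\<lambda>(a, i). coeff (newton a) i)"
  have "?C * mat N N (\<lambda>(i, s). z s ^ i) = mat N N (\<lambda>(a, s). poly (newton a) (z s))"
    by (rule coeff_mat_mult_power_mat) (simp add: deg)
  moreover have "det (?C * mat N N (\<lambda>(i, s). z s ^ i)) = det ?C * det (mat N N (\<lambda>(i, s). z s ^ i))"
    by (rule det_mult) auto
  moreover have "det ?C = 1"
    by (rule det_coeff_mat_monic(1)) (use deg lead in auto)
  moreover have "det (mat N N (\<lambda>(a, s). poly (newton a) (z s))) = (\<Prod>a<N. poly (newton a) (z a))"
    by (rule det_mat_upper_triangular) (simp add: newton_def poly_prod_linear_eq_0)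
  ultimately show ?thesis
    by (simp add: newton_def poly_prod)
qed

section \<open>Hankel determinants of orthogonal polynomials\<close>

locale orthogonal_polys = poly_functional L for L :: "'a::field poly \<Rightarrow> 'a" +
  fixes p :: "nat \<Rightarrow> 'a poly" and \<omega> :: "nat \<Rightarrow> 'a"
  assumes p_monic: "\<And>j. lead_coeff (p j) = 1"
    and p_degree: "\<And>j. degree (p j) = j"
    and p_orth: "\<And>i j. L (p i * p j) = (if i = j then \<omega> j else 0)"
begin

lemma p_nonzero: "p j \<noteq> 0"
  using p_monic[of j] by auto

lemma L_mult_eq_sum:
  assumes "degree f < N"
  shows "L (f * g) = (\<Sum>a<N. coeff f a * L (monom 1 a * g))"
  using mult_eq_sum_smult_monom_mult[OF assms] by (simp add: L_sum L_smult)

lemma hankel_mult_coeff_mat: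
  "mat h h (\<lambda>(i, j). moment L (i + j)) * mat h h (\<lambda>(b, j). coeff (p j) b)
    = mat h h (\<lambda>(a, j). L (monom 1 a * p j))"
proof (rule eq_matI)
  fix a j assume "a < dim_row (mat h h (\<lambda>(a, j). L (monom 1 a * p j)))"
    and "j < dim_col (mat h h (\<lambda>(a, j). L (monom 1 a * p j)))"
  then have aj: "a < h" "j < h" by simp_all
  have "L (monom 1 a * p j) = L (p j * monom 1 a)"
    by (simp add: mult.commute)
  also have "\<dots> = (\<Sum>b<h. coeff (p j) b * moment L (a + b))"
    using aj by (simp add: L_mult_eq_sum[of _ h] p_degree mult_monom moment_def add.commute)
  finally show "(mat h h (\<lambda>(i, j). moment L (i + j)) * mat h h (\<lambda>(b, j). coeff (p j) b)) $$ (a, j)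
      = mat h h (\<lambda>(a, j). L (monom 1 a * p j)) $$ (a, j)"
    using aj by (simp add: scalar_prod_def atLeast0LessThan mult.commute)
qed simp_all

lemma hankel_det: "det (mat h h (\<lambda>(i, j). moment L (i + j))) = (\<Prod>i<h. \<omega> i)"
proof -
  let ?H = "mat h h (\<lambda>(i, j). moment L (i + j))"
  let ?P = "mat h h (\<lambda>(b, j). coeff (p j) b)"
  let ?Q = "mat h h (\<lambda>(i, a). coeff (p i) a)"
  have "?Q * (?H * ?P) = mat h h (\<lambda>(i, j). if i = j then \<omega> j else 0)"
    unfolding hankel_mult_coeff_mat
    by (rule eq_matI)
      (simp_all add: scalar_prod_def atLeast0LessThan L_mult_eq_sum[of _ h, symmetric] p_degree
          p_orth)
  moreover have "det (?Q * (?H * ?P)) = det ?Q * (det ?H * det ?P)"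
    by (subst det_mult[of _ h]) (auto simp: det_mult[of _ h])
  moreover have "det ?Q = 1" "det ?P = 1"
    using det_coeff_mat_monic[of h p] p_degree p_monic by simp_all
  ultimately show ?thesis
    by (simp add: det_mat_lower_triangular)
qed

end

section \<open>The matrix of a rational modification\<close>

locale rational_modification = orthogonal_polys L p \<omega>
  for L :: "'a::field poly \<Rightarrow> 'a" and p \<omega> +
  fixes k m n :: nat and x :: "nat \<Rightarrow> 'a" and y :: "nat \<Rightarrow> 'a fls"
  assumes x_distinct: "inj_on x {1..m}"
    and y_distinct: "inj_on y {1..k}"
    and y_large: "\<And>l. l \<in> {1..k} \<Longrightarrow> fls_subdegree (y l) < 0"
begin

definition numer :: "'a poly" where
  "numer = (\<Prod>l\<in>{1..m}. [:- x l, 1:])"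

definition denom :: "'a fls poly" where
  "denom = (\<Prod>l\<in>{1..k}. [:- y l, 1:])"

definition denom_except :: "nat \<Rightarrow> 'a fls poly" where
  "denom_except l = (\<Prod>l'\<in>{1..k} - {l}. [:- y l', 1:])"

definition weight :: "'a poly fls" where
  "weight = (\<Prod>l\<in>{1..k}. inv_u_minus (y l))"

definition pairing :: "'a fls poly \<Rightarrow> 'a poly \<Rightarrow> 'a fls" where
  "pairing g f = I (fls_const f * fls_poly_embed g * weight)"

definition eval_x :: "nat \<Rightarrow> 'a poly \<Rightarrow> 'a fls" where
  "eval_x r f = fls_const (poly f (x (r + 1)))"

definition denom_rem_coeff :: "'a fls poly \<Rightarrow> nat \<Rightarrow> 'a fls" where
  "denom_rem_coeff g j = coeff (g * monom 1 j mod denom) (k - 1)"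

definition nmax :: nat where "nmax = max n k"
definition npoly :: nat where "npoly = m + n"
definition dim :: nat where "dim = m + nmax"

lemma dim_eq: "dim = npoly + (k - n)"
  by (simp add: dim_def npoly_def nmax_def)

text \<open>The extra columns \<open>c \<ge> npoly\<close> are negated and carry the exponents
  \<open>k - n - 1, \<dots>, 0\<close> in this order, as the leading columns of \<open>N_mat\<close> do.\<close>
definition eval_pairing_entry ::
    "(nat \<Rightarrow> 'a fls poly) \<Rightarrow> (nat \<Rightarrow> 'a poly) \<Rightarrow> nat \<times> nat \<Rightarrow> 'a fls" where
  "eval_pairing_entry G F = (\<lambda>(r, c).
     if c < npoly then (if r < m then eval_x r (F c) else pairing (G (r - m)) (F c))
     else if r < m then 0 else - denom_rem_coeff (G (r - m)) (k - n - 1 - (c - npoly)))"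

definition eval_pairing_mat :: "(nat \<Rightarrow> 'a fls poly) \<Rightarrow> (nat \<Rightarrow> 'a poly) \<Rightarrow> 'a fls mat" where
  "eval_pairing_mat G F = mat dim dim (eval_pairing_entry G F)"

definition col_transform :: "(nat \<Rightarrow> 'a poly) \<Rightarrow> 'a fls mat" where
  "col_transform F = mat dim dim (\<lambda>(a, c).
     if c < npoly then fls_const (coeff (F c) a) else if a = c then 1 else 0)"

definition row_transform :: "(nat \<Rightarrow> 'a fls poly) \<Rightarrow> 'a fls mat" where
  "row_transform G = mat dim dim (\<lambda>(r, a).
     if r < m then (if a = r then 1 else 0)
     else if a < m then 0 else coeff (G (r - m)) (a - m))"

abbreviation row_monom :: "nat \<Rightarrow> 'a fls poly" where
  "row_monom i \<equiv> monom 1 i"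

abbreviation col_monom :: "nat \<Rightarrow> 'a poly" where
  "col_monom j \<equiv> monom 1 j"

lemma eval_pairing_mat_carrier [simp]: "eval_pairing_mat G F \<in> carrier_mat dim dim"
  by (simp add: eval_pairing_mat_def)

lemma col_transform_carrier [simp]: "col_transform F \<in> carrier_mat dim dim"
  by (simp add: col_transform_def)

lemma row_transform_carrier [simp]: "row_transform G \<in> carrier_mat dim dim"
  by (simp add: row_transform_def)

lemma pairing_eq_sum_row_monom:
  assumes "degree g < nmax"
  shows "pairing g f = (\<Sum>i<nmax. coeff g i * pairing (row_monom i) f)"
proof -
  have "pairing g f = I (\<Sum>i<nmax. fls_cpoly (coeff g i) * (fls_const f * fls_u ^ i * weight))"
    unfolding pairing_def fls_poly_embed_eq_sum[OF assms]
    by (simp only: sum_distrib_left sum_distrib_right) (simp only: ac_simps)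
  also have "\<dots> = (\<Sum>i<nmax. coeff g i * pairing (row_monom i) f)"
    by (simp add: I_sum I_cpoly_mult pairing_def fls_poly_embed_monom)
  finally show ?thesis .
qed

lemma denom_rem_coeff_eq_sum_row_monom:
  assumes "degree g < nmax"
  shows "denom_rem_coeff g j = (\<Sum>i<nmax. coeff g i * denom_rem_coeff (row_monom i) j)"
  by (simp add: denom_rem_coeff_def mult_eq_sum_smult_monom_mult[OF assms] sum_mod_poly_left
      mod_smult_left coeff_sum)

lemma pairing_eq_sum_col_monom:
  assumes "degree f < N"
  shows "pairing g f = (\<Sum>j<N. fls_const (coeff f j) * pairing g (col_monom j))"
proof -
  have "fls_const f = (\<Sum>j<N. fls_const [:coeff f j:] * fls_const (col_monom j))"
    by (subst poly_eq_sum_monom_lessThan[OF assms])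
      (simp add: fls_const_sum fls_const_mult_const smult_monom)
  then have "pairing g f
      = I (\<Sum>j<N. fls_const [:coeff f j:] * (fls_const (col_monom j) * fls_poly_embed g * weight))"
    unfolding pairing_def by (simp only: sum_distrib_right mult.assoc)
  then show ?thesis
    by (simp add: I_sum I_const_mult pairing_def)
qed

lemma eval_x_eq_sum_col_monom:
  assumes "degree f < N"
  shows "eval_x r f = (\<Sum>j<N. fls_const (coeff f j) * eval_x r (col_monom j))"
  unfolding eval_x_def by (simp add: poly_eq_sum_lessThan[OF assms] fls_const_sum poly_monom)

lemma eval_pairing_mat_col_transform:
  assumes deg: "\<And>c. c < npoly \<Longrightarrow> degree (F c) < npoly"
  shows "eval_pairing_mat G col_monom * col_transform F = eval_pairing_mat G F"
proof (rule eq_matI)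
  fix r c assume "r < dim_row (eval_pairing_mat G F)" "c < dim_col (eval_pairing_mat G F)"
  then have r: "r < dim" and c: "c < dim" by (simp_all add: eval_pairing_mat_def)
  define Z where "Z = eval_pairing_entry G col_monom"
  have "(eval_pairing_mat G col_monom * col_transform F) $$ (r, c) = (\<Sum>a<dim. Z (r, a) *
      (if c < npoly then fls_const (coeff (F c) a) else if a = c then 1 else 0))"
    unfolding eval_pairing_mat_def col_transform_def Z_def using r c
    by (subst index_mat_mult_mat) auto
  also have "\<dots> = eval_pairing_mat G F $$ (r, c)"
  proof (cases "c < npoly")
    case True
    have "(\<Sum>a<dim. Z (r, a) * fls_const (coeff (F c) a))
        = (\<Sum>a<npoly. Z (r, a) * fls_const (coeff (F c) a))"
      by (rule sum.mono_neutral_right) (use deg[OF True] in \<open>auto simp: dim_eq coeff_eq_0\<close>)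
    then show ?thesis
      using r c True dim_eq
      by (auto simp: Z_def eval_pairing_mat_def eval_pairing_entry_def
          pairing_eq_sum_col_monom[OF deg[OF True]]
          eval_x_eq_sum_col_monom[OF deg[OF True]] mult.commute)
  next
    case False
    have "(\<Sum>a<dim. Z (r, a) * (if a = c then 1 else 0)) = (\<Sum>a<dim. if a = c then Z (r, c) else 0)"
      by (rule sum.cong) auto
    also have "\<dots> = Z (r, c)"
      using c by simp
    finally have "(\<Sum>a<dim. Z (r, a) * (if a = c then 1 else 0)) = Z (r, c)" .
    then show ?thesis
      using False r c by (simp add: Z_def eval_pairing_mat_def eval_pairing_entry_def)
  qed
  finally show "(eval_pairing_mat G col_monom * col_transform F) $$ (r, c)
      = eval_pairing_mat G F $$ (r, c)" .
qed (simp_all add: eval_pairing_mat_def col_transform_def)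

lemma row_transform_eval_pairing_mat:
  assumes deg: "\<And>a. a < nmax \<Longrightarrow> degree (G a) < nmax"
  shows "row_transform G * eval_pairing_mat row_monom F = eval_pairing_mat G F"
proof (rule eq_matI)
  fix r c assume "r < dim_row (eval_pairing_mat G F)" "c < dim_col (eval_pairing_mat G F)"
  then have r: "r < dim" and c: "c < dim" by (simp_all add: eval_pairing_mat_def)
  define Z where "Z = eval_pairing_entry row_monom F"
  define S where "S = (\<lambda>(r, a). if r < m then (if a = r then 1 else 0)
     else if a < m then 0 else coeff (G (r - m)) (a - m))"
  have "(row_transform G * eval_pairing_mat row_monom F) $$ (r, c) = (\<Sum>a<dim. S (r, a) * Z (a, c))"
    unfolding eval_pairing_mat_def row_transform_def Z_def S_def using r c
    by (subst index_mat_mult_mat) auto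
  also have "\<dots> = eval_pairing_mat G F $$ (r, c)"
  proof (cases "r < m")
    case True
    have "(\<Sum>a<dim. S (r, a) * Z (a, c)) = (\<Sum>a<dim. if a = r then Z (r, c) else 0)"
      using True r by (intro sum.cong) (auto simp: S_def)
    then show ?thesis
      using True r c by (simp add: Z_def eval_pairing_mat_def eval_pairing_entry_def)
  next
    case False
    then have rm: "r - m < nmax"
      using r by (simp add: dim_def)
    have "(\<Sum>a<dim. S (r, a) * Z (a, c)) = (\<Sum>i<nmax. coeff (G (r - m)) i * Z (m + i, c))"
      unfolding dim_def sum.lessThan_add using False r by (simp add: S_def)
    then show ?thesis
      using False r c rm
      by (auto simp: Z_def eval_pairing_mat_def eval_pairing_entry_def dim_def
          pairing_eq_sum_row_monom[OF deg[OF rm]]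
          denom_rem_coeff_eq_sum_row_monom[OF deg[OF rm]] sum_negf)
  qed
  finally show "(row_transform G * eval_pairing_mat row_monom F) $$ (r, c)
      = eval_pairing_mat G F $$ (r, c)" .
qed (simp_all add: eval_pairing_mat_def row_transform_def)

lemma det_col_transform:
  assumes "\<And>c. c < npoly \<Longrightarrow> degree (F c) = c" and "\<And>c. c < npoly \<Longrightarrow> lead_coeff (F c) = 1"
  shows "det (col_transform F) = 1"
proof -
  have "det (col_transform F) = (\<Prod>c<dim. col_transform F $$ (c, c))"
    unfolding col_transform_def
    by (subst det_mat_upper_triangular) (use assms in \<open>auto simp: coeff_eq_0\<close>)
  also have "\<dots> = 1"
    using assms by (intro prod.neutral) (auto simp: col_transform_def)
  finally show ?thesis .
qed

lemma det_eval_pairing_mat_change_cols: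
  assumes "\<And>c. c < npoly \<Longrightarrow> degree (F c) = c" and "\<And>c. c < npoly \<Longrightarrow> lead_coeff (F c) = 1"
  shows "det (eval_pairing_mat G F) = det (eval_pairing_mat G col_monom)"
  using det_mult[OF eval_pairing_mat_carrier col_transform_carrier, of G col_monom F]
    eval_pairing_mat_col_transform[of F G] det_col_transform[OF assms] assms(1)
  by simp

lemma y_neq: "i \<in> {1..k} \<Longrightarrow> j \<in> {1..k} \<Longrightarrow> i \<noteq> j \<Longrightarrow> y i \<noteq> y j"
  using inj_onD[OF y_distinct] by blast

lemma degree_numer: "degree numer = m"
  by (simp add: numer_def degree_prod_linear)

lemma lead_coeff_numer: "lead_coeff numer = 1"
  unfolding numer_def by (rule lead_coeff_prod_linear)

lemma degree_denom: "degree denom = k"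
  by (simp add: denom_def degree_prod_linear)

lemma lead_coeff_denom: "lead_coeff denom = 1"
  unfolding denom_def by (rule lead_coeff_prod_linear)

lemma degree_denom_except: "l \<in> {1..k} \<Longrightarrow> degree (denom_except l) = k - 1"
  by (simp add: denom_except_def degree_prod_linear)

lemma lead_coeff_denom_except: "lead_coeff (denom_except l) = 1"
  unfolding denom_except_def by (rule lead_coeff_prod_linear)

lemma denom_split: "l \<in> {1..k} \<Longrightarrow> denom = [:- y l, 1:] * denom_except l"
  unfolding denom_def denom_except_def by (simp add: prod.remove)

lemma embed_denom_mult_weight: "fls_poly_embed denom * weight = 1"
proof -
  have "fls_poly_embed denom * weight = (\<Prod>l\<in>{1..k}. inv_u_minus (y l) * (fls_u - fls_cpoly (y l)))"
    by (simp add: denom_def weight_def fls_poly_embed_prod fls_poly_embed_linear prod.distrib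
        mult.commute)
  also have "\<dots> = 1"
    by (simp add: inv_u_minus_mult y_large)
  finally show ?thesis .
qed

lemma embed_denom_except_mult_weight:
  assumes l: "l \<in> {1..k}"
  shows "fls_poly_embed (denom_except l) * weight = inv_u_minus (y l)"
proof -
  have "weight = inv_u_minus (y l) * (\<Prod>l'\<in>{1..k} - {l}. inv_u_minus (y l'))"
    unfolding weight_def using l by (simp add: prod.remove)
  then have "fls_poly_embed (denom_except l) * weight = inv_u_minus (y l) *
      (\<Prod>l'\<in>{1..k} - {l}. inv_u_minus (y l') * (fls_u - fls_cpoly (y l')))"
    by (simp add: denom_except_def fls_poly_embed_prod fls_poly_embed_linear prod.distrib ac_simps)
  also have "\<dots> = inv_u_minus (y l)"
    by (simp add: inv_u_minus_mult y_large)
  finally show ?thesis .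
qed

lemma pairing_denom_mult: "pairing (denom * map_poly fls_const f) g = fls_const (L (g * f))"
proof -
  have "pairing (denom * map_poly fls_const f) g
      = I (fls_const (g * f) * (fls_poly_embed denom * weight))"
    unfolding pairing_def fls_poly_embed_mult fls_poly_embed_map_const
    by (simp only: fls_const_mult_const[symmetric] ac_simps)
  then show ?thesis
    by (simp add: embed_denom_mult_weight I_const)
qed

lemma pairing_denom_except:
  "l \<in> {1..k} \<Longrightarrow> pairing (denom_except l) (p c) = - q_fun L p c (y l)"
  by (simp add: pairing_def q_fun_def inv_minus_u_eq I_uminus mult.assoc
      embed_denom_except_mult_weight)

lemma pairing_monom: "pairing (row_monom i) (numer * col_monom j) = mod_moment L m x k y (i + j)"
proof -
  have "pairing (row_monom i) (numer * col_monom j)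
      = I (fls_const (numer * col_monom j * col_monom i) * weight)"
    by (simp add: pairing_def fls_poly_embed_monom fls_u_power fls_const_mult_const)
  also have "numer * col_monom j * col_monom i = monom 1 (i + j) * numer"
    by (simp add: mult_monom ac_simps)
  finally show ?thesis
    by (simp add: mod_moment_def numer_def weight_def)
qed

lemma denom_rem_coeff_monom:
  assumes "i + j < k"
  shows "denom_rem_coeff (row_monom i) j = (if i + j = k - 1 then 1 else 0)"
proof -
  have "row_monom i * monom 1 j mod denom = monom 1 (i + j)"
    by (simp add: mult_monom mod_poly_less degree_denom degree_monom_eq assms)
  then show ?thesis
    by (simp add: denom_rem_coeff_def coeff_monom)
qed

text \<open>Modulo \<open>denom\<close>, multiplying \<open>denom_except l\<close> by \<open>u\<close> amounts to multiplying it by \<open>y l\<close>.\<close>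
lemma denom_rem_coeff_denom_except:
  assumes l: "l \<in> {1..k}"
  shows "denom_rem_coeff (denom_except l) j = y l ^ j"
proof -
  have "poly (monom 1 j - [:y l ^ j:]) (y l) = 0"
    by (simp add: poly_monom)
  then obtain Q where Q: "monom 1 j - [:y l ^ j:] = [:- y l, 1:] * Q"
    by (metis dvdE poly_eq_0_iff_dvd)
  have "denom_except l * monom 1 j
      = denom_except l * (monom 1 j - [:y l ^ j:]) + denom_except l * [:y l ^ j:]"
    by (simp add: algebra_simps)
  also have "denom_except l * (monom 1 j - [:y l ^ j:]) = denom * Q"
    unfolding Q denom_split[OF l] by (simp only: ac_simps)
  finally have "denom_except l * monom 1 j
      = Polynomial.smult (y l ^ j) (denom_except l) + denom * Q"
    by simp
  then have "denom_except l * monom 1 j mod denom = Polynomial.smult (y l ^ j) (denom_except l)"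
    using degree_denom_except[OF l] l
    by (simp add: mod_poly_less degree_denom degree_smult_le order.strict_trans1)
  then show ?thesis
    using degree_denom_except[OF l] lead_coeff_denom_except[of l]
    by (simp add: denom_rem_coeff_def)
qed

definition newton_x :: "nat \<Rightarrow> 'a poly" where
  "newton_x c = (\<Prod>r<c. [:- x (r + 1), 1:])"

definition col_basis :: "nat \<Rightarrow> 'a poly" where
  "col_basis c = (if c < m then newton_x c else numer * col_monom (c - m))"

lemma degree_col_basis: "degree (col_basis c) = c"
proof -
  have "numer \<noteq> 0"
    using lead_coeff_numer by auto
  then show ?thesis
    by (simp add: col_basis_def newton_x_def degree_prod_linear degree_mult_eq degree_numer
        degree_monom_eq)
qed

lemma lead_coeff_col_basis: "lead_coeff (col_basis c) = 1"
proof (cases "c < m")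
  case True
  then show ?thesis
    unfolding col_basis_def newton_x_def using lead_coeff_prod_linear by simp
qed (simp add: col_basis_def lead_coeff_mult lead_coeff_numer degree_monom_eq)

lemma poly_numer_x: "r < m \<Longrightarrow> poly numer (x (Suc r)) = 0"
  unfolding numer_def by (rule poly_prod_linear_eq_0) auto

lemma poly_newton_x: "i < c \<Longrightarrow> poly (newton_x c) (x (Suc i)) = 0"
  using poly_prod_linear_eq_0[of "{..<c}" i "\<lambda>r. x (Suc r)"] by (simp add: newton_x_def)

definition vander_x :: 'a where
  "vander_x = (\<Prod>j\<in>{1..m}. \<Prod>i\<in>{1..<j}. x j - x i)"

definition vander_y :: "'a fls" where
  "vander_y = (\<Prod>j\<in>{1..k}. \<Prod>i\<in>{1..<j}. y i - y j)"

lemma vander_x_eq: "vander_x = (\<Prod>a<m. \<Prod>l<a. x (Suc a) - x (Suc l))"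
  unfolding vander_x_def by (rule prod_atLeast1_lessThan_reindex)

lemma det_eval_block_col_basis:
  "det (mat m m (\<lambda>(i, j). eval_pairing_entry row_monom col_basis (i, j))) = fls_const vander_x"
proof -
  have "det (mat m m (\<lambda>(i, j). eval_pairing_entry row_monom col_basis (i, j)))
      = (\<Prod>i<m. eval_pairing_entry row_monom col_basis (i, i))"
    by (rule det_mat_lower_triangular)
      (simp add: eval_pairing_entry_def npoly_def col_basis_def eval_x_def poly_newton_x)
  also have "\<dots> = fls_const vander_x"
    by (simp add: eval_pairing_entry_def npoly_def col_basis_def eval_x_def newton_x_def poly_prod
        fls_const_prod vander_x_eq)
  finally show ?thesis .
qed

lemma det_pairing_block_col_basis:
  "det (mat nmax nmax (\<lambda>(i, j). eval_pairing_entry row_monom col_basis (m + i, m + j)))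
    = det (mat n n (\<lambda>(i, j). mod_moment L m x k y (i + j))) * (- 1) ^ (k - n)"
proof -
  let ?E = "\<lambda>i j. eval_pairing_entry row_monom col_basis (m + i, m + j)"
  have extra: "?E i j = (if i = j then - 1 else 0)" if "i \<le> j" "n \<le> j" "j < n + (k - n)" for i j
    using that by (simp add: eval_pairing_entry_def npoly_def denom_rem_coeff_monom) arith
  have "nmax = n + (k - n)"
    by (simp add: nmax_def)
  then have "det (mat nmax nmax (\<lambda>(i, j). ?E i j))
      = det (mat n n (\<lambda>(i, j). ?E i j)) * det (mat (k - n) (k - n) (\<lambda>(i, j). ?E (n + i) (n + j)))"
    by (simp only:) (rule det_mat_block_lower_triangular, simp add: extra)
  also have "mat n n (\<lambda>(i, j). ?E i j) = mat n n (\<lambda>(i, j). mod_moment L m x k y (i + j))"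
    by (rule eq_matI) (simp_all add: eval_pairing_entry_def npoly_def col_basis_def pairing_monom)
  also have "det (mat (k - n) (k - n) (\<lambda>(i, j). ?E (n + i) (n + j))) = (- 1) ^ (k - n)"
    by (subst det_mat_lower_triangular) (simp_all add: extra)
  finally show ?thesis .
qed

lemma det_eval_pairing_mat_col_basis:
  "det (eval_pairing_mat row_monom col_basis)
    = fls_const vander_x * det (mat n n (\<lambda>(i, j). mod_moment L m x k y (i + j))) * (- 1) ^ (k - n)"
proof -
  have "eval_pairing_mat row_monom col_basis
      = mat (m + nmax) (m + nmax) (\<lambda>(i, j). eval_pairing_entry row_monom col_basis (i, j))"
    by (simp add: eval_pairing_mat_def dim_def)
  then show ?thesis
    using det_eval_block_col_basis det_pairing_block_col_basis
    by (simp add: det_mat_block_lower_triangular eval_pairing_entry_def col_basis_def eval_x_def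
        poly_numer_x mult.assoc)
qed

definition row_basis :: "nat \<Rightarrow> 'a fls poly" where
  "row_basis a = (if a < k then denom_except (a + 1) else denom * map_poly fls_const (p (a - k)))"

lemma degree_denom_mult_p: "degree (denom * map_poly fls_const (p i)) = k + i"
proof -
  have "denom \<noteq> 0"
    using lead_coeff_denom by auto
  moreover have "map_poly fls_const (p i) \<noteq> 0"
    using p_nonzero by (simp add: map_poly_eq_0_iff)
  ultimately show ?thesis
    by (simp add: degree_mult_eq degree_denom degree_map_poly p_degree)
qed

lemma lead_coeff_denom_mult_p: "lead_coeff (denom * map_poly fls_const (p i)) = 1"
  by (simp add: lead_coeff_mult lead_coeff_denom degree_map_poly coeff_map_poly p_monic)

lemma degree_row_basis_less: "a < nmax \<Longrightarrow> degree (row_basis a) < nmax"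
  by (auto simp: row_basis_def nmax_def degree_denom_except degree_denom_mult_p)

lemma det_row_transform: "det (row_transform G) = det (mat nmax nmax (\<lambda>(i, j). coeff (G i) j))"
proof -
  have "row_transform G = mat (m + nmax) (m + nmax) (\<lambda>(r, a).
     if r < m then (if a = r then 1 else 0) else if a < m then 0 else coeff (G (r - m)) (a - m))"
    by (simp add: row_transform_def dim_def)
  then show ?thesis
    by (simp add: det_mat_block_lower_triangular det_mat_lower_triangular)
qed

lemma det_row_transform_row_basis:
  "det (row_transform row_basis) = det (mat k k (\<lambda>(i, j). coeff (denom_except (i + 1)) j))"
proof -
  let ?C = "\<lambda>i j. coeff (row_basis i) j"
  have "nmax = k + (n - k)"
    by (simp add: nmax_def)
  then have "det (mat nmax nmax (\<lambda>(i, j). ?C i j))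
      = det (mat k k (\<lambda>(i, j). ?C i j)) * det (mat (n - k) (n - k) (\<lambda>(i, j). ?C (k + i) (k + j)))"
    by (simp only:) (rule det_mat_block_lower_triangular,
        simp add: row_basis_def degree_denom_except coeff_eq_0)
  also have "det (mat (n - k) (n - k) (\<lambda>(i, j). ?C (k + i) (k + j))) = 1"
    using lead_coeff_denom_mult_p
    by (subst det_mat_lower_triangular) (simp_all add: row_basis_def coeff_eq_0 degree_denom_mult_p)
  also have "mat k k (\<lambda>(i, j). ?C i j) = mat k k (\<lambda>(i, j). coeff (denom_except (i + 1)) j)"
    by (rule eq_matI) (simp_all add: row_basis_def)
  finally show ?thesis
    by (simp add: det_row_transform)
qed

lemma prod_denom_except_at_y:
  "(\<Prod>a<k. poly (denom_except (a + 1)) (y (a + 1))) = (\<Prod>j\<in>{1..k}. \<Prod>i\<in>{1..<j}. y j - y i) * vander_y"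
proof -
  have "(\<Prod>a<k. poly (denom_except (a + 1)) (y (a + 1))) = (\<Prod>j\<in>{1..k}. poly (denom_except j) (y j))"
    by (rule prod.reindex_bij_witness[of _ "\<lambda>j. j - 1" "\<lambda>a. a + 1"]) auto
  also have "\<dots> = (\<Prod>j\<in>{1..k}. \<Prod>l\<in>{1..k} - {j}. y j - y l)"
    by (simp add: denom_except_def poly_prod)
  also have "\<dots> = (\<Prod>j\<in>{1..k}. (\<Prod>l\<in>{1..<j}. y j - y l) * (\<Prod>l\<in>{j<..k}. y j - y l))"
    by (rule prod.cong[OF refl prod_atLeast1_atMost_remove])
  also have "\<dots> = (\<Prod>j\<in>{1..k}. \<Prod>l\<in>{1..<j}. y j - y l) * (\<Prod>j\<in>{1..k}. \<Prod>l\<in>{j<..k}. y j - y l)"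
    by (rule prod.distrib)
  also have "(\<Prod>j\<in>{1..k}. \<Prod>l\<in>{j<..k}. y j - y l) = vander_y"
    unfolding prod_triangle_swap vander_y_def ..
  finally show ?thesis .
qed

lemma det_denom_except_coeff_mat:
  "det (mat k k (\<lambda>(i, j). coeff (denom_except (i + 1)) j)) = vander_y"
proof -
  let ?C = "mat k k (\<lambda>(i, j). coeff (denom_except (i + 1)) j)"
  let ?V = "mat k k (\<lambda>(i, s). y (s + 1) ^ i)"
  let ?D = "\<Prod>j\<in>{1..k}. \<Prod>i\<in>{1..<j}. y j - y i"
  have "det ?V = ?D"
    unfolding det_vandermonde prod_atLeast1_lessThan_reindex by simp
  then have "det ?C * ?D = det (?C * ?V)"
    by (simp add: det_mult[of _ k])
  also have "?C * ?V = mat k k (\<lambda>(a, s). poly (denom_except (a + 1)) (y (s + 1)))"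
    by (rule coeff_mat_mult_power_mat) (simp add: degree_denom_except)
  also have "det \<dots> = (\<Prod>a<k. poly (denom_except (a + 1)) (y (a + 1)))"
    by (rule det_mat_upper_triangular) (simp add: denom_except_def poly_prod_linear_eq_0)
  also have "\<dots> = ?D * vander_y"
    by (rule prod_denom_except_at_y)
  finally have "det ?C * ?D = ?D * vander_y" .
  moreover have "?D \<noteq> 0"
    using y_neq by (auto simp: prod_zero_iff)
  ultimately show ?thesis
    by (simp add: mult.commute)
qed

lemma vander_x_nonzero: "vander_x \<noteq> 0"
  using inj_onD[OF x_distinct] by (force simp: vander_x_def prod_zero_iff)

lemma vander_y_nonzero: "vander_y \<noteq> 0"
  using y_neq by (force simp: vander_y_def prod_zero_iff)

lemma det_eval_pairing_mat_row_basis_p: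
  "det (eval_pairing_mat row_basis p) = vander_y * fls_const vander_x
     * det (mat n n (\<lambda>(i, j). mod_moment L m x k y (i + j))) * (- 1) ^ (k - n)"
proof -
  have "det (eval_pairing_mat row_basis p)
      = det (row_transform row_basis) * det (eval_pairing_mat row_monom p)"
    using det_mult[OF row_transform_carrier eval_pairing_mat_carrier, of row_basis row_monom p]
    by (simp add: row_transform_eval_pairing_mat degree_row_basis_less)
  also have "det (eval_pairing_mat row_monom p) = det (eval_pairing_mat row_monom col_basis)"
    using det_eval_pairing_mat_change_cols[where F = p, OF p_degree p_monic]
      det_eval_pairing_mat_change_cols[where F = col_basis, OF degree_col_basis lead_coeff_col_basis]
    by simp
  finally show ?thesis
    by (simp only: det_row_transform_row_basis det_denom_except_coeff_mat
        det_eval_pairing_mat_col_basis mult.assoc)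
qed

lemma eval_pairing_mat_row_basis_p:
  assumes r: "r < dim" and c: "c < dim"
  shows "eval_pairing_mat row_basis p $$ (r, c) =
    (if c < npoly then
       (if r < m then fls_const (poly (p c) (x (r + 1)))
        else if r - m < k then - q_fun L p c (y (r - m + 1))
        else fls_const (L (p c * p (r - m - k))))
     else if r < m then 0 else - (y (r - m + 1) ^ (k - n - 1 - (c - npoly))))"
proof (cases "c < npoly")
  case True
  then show ?thesis
    using r c by (auto simp: eval_pairing_mat_def eval_pairing_entry_def eval_x_def row_basis_def
        pairing_denom_except pairing_denom_mult)
next
  case False
  then have "r - m < k" if "\<not> r < m"
    using r c that by (auto simp: dim_def npoly_def nmax_def)
  then show ?thesis
    using r c False
    by (auto simp: eval_pairing_mat_def eval_pairing_entry_def row_basis_def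
        denom_rem_coeff_denom_except)
qed

definition M_mat :: "'a fls mat" where
  "M_mat = mat (m + k) (m + k) (\<lambda>(r, c).
     if r < m then fls_const (poly (p (n - k + c)) (x (r + 1)))
     else q_fun L p (n - k + c) (y (r - m + 1)))"

definition N_mat :: "'a fls mat" where
  "N_mat = mat (m + k) (m + k) (\<lambda>(r, c).
     if r < m then (if c < k - n then 0 else fls_const (poly (p (c - (k - n))) (x (r + 1))))
     else if c < k - n then y (r - m + 1) ^ (k - n - 1 - c)
     else q_fun L p (c - (k - n)) (y (r - m + 1)))"

text \<open>The last \<open>n - k\<close> rows are the unit vectors scaled by \<open>\<omega>\<close>; moving them to the top
  leaves \<open>M_mat\<close> with its \<open>q\<close>-rows negated.\<close>
lemma det_eval_pairing_mat_row_basis_p_ge: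
  assumes kn: "k \<le> n"
  shows "det (eval_pairing_mat row_basis p)
    = (- 1) ^ ((n - k) * (m + k)) * (fls_const (\<Prod>i<n - k. \<omega> i) * ((- 1) ^ k * det M_mat))"
proof -
  let ?Z = "eval_pairing_mat row_basis p"
  let ?g = "\<lambda>i j. ?Z $$ (if i < n - k then i + (m + k) else i - (n - k), j)"
  have dim: "dim = (n - k) + (m + k)" and npoly: "npoly = dim"
    using kn by (simp_all add: dim_def npoly_def nmax_def)
  have top: "?Z $$ (i + (m + k), j) = fls_const (if i = j then \<omega> i else 0)"
    if "i < n - k" "j < n + m" for i j
    using that kn by (simp add: dim npoly eval_pairing_mat_row_basis_p p_orth)
  have "det ?Z = (- 1) ^ ((n - k) * (m + k)) * det (mat dim dim (\<lambda>(i, j). ?g i j))"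
    using det_swap_rows[of ?Z "n - k" "m + k"] eval_pairing_mat_carrier[of row_basis p]
    by (simp add: dim)
  also have "det (mat dim dim (\<lambda>(i, j). ?g i j))
      = det (mat (n - k) (n - k) (\<lambda>(i, j). ?g i j))
        * det (mat (m + k) (m + k) (\<lambda>(i, j). ?g (n - k + i) (n - k + j)))"
    unfolding dim by (rule det_mat_block_lower_triangular) (simp add: top kn)
  also have "det (mat (n - k) (n - k) (\<lambda>(i, j). ?g i j)) = fls_const (\<Prod>i<n - k. \<omega> i)"
    by (subst det_mat_lower_triangular) (simp_all add: top fls_const_prod)
  also have "mat (m + k) (m + k) (\<lambda>(i, j). ?g (n - k + i) (n - k + j))
      = mat (m + k) (m + k) (\<lambda>(i, j). (if i < m then 1 else - 1) * M_mat $$ (i, j))"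
    by (rule eq_matI) (auto simp: dim npoly eval_pairing_mat_row_basis_p M_mat_def)
  also have "det \<dots> = (- 1) ^ k * det M_mat"
    by (rule det_mat_negate_rows_from) (simp add: M_mat_def)
  finally show ?thesis .
qed

text \<open>Moving the \<open>k - n\<close> remainder columns to the front turns the matrix into \<open>N_mat\<close> with
  its \<open>y\<close>-rows negated.\<close>
lemma det_eval_pairing_mat_row_basis_p_lt:
  assumes nk: "n < k"
  shows "det (eval_pairing_mat row_basis p) = (- 1) ^ ((k - n) * (m + n)) * ((- 1) ^ k * det N_mat)"
proof -
  let ?Z = "eval_pairing_mat row_basis p"
  have dim: "dim = (k - n) + (m + n)" "m + k = (k - n) + (m + n)"
    using nk by (simp_all add: dim_def nmax_def)
  have "det ?Z = (- 1) ^ ((k - n) * (m + n)) * det (mat (m + k) (m + k) (\<lambda>(i, j).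
      ?Z $$ (i, if j < k - n then j + (m + n) else j - (k - n))))"
    using det_swap_cols[of ?Z "k - n" "m + n"] eval_pairing_mat_carrier[of row_basis p]
    by (simp add: dim)
  also have "mat (m + k) (m + k)
        (\<lambda>(i, j). ?Z $$ (i, if j < k - n then j + (m + n) else j - (k - n)))
      = mat (m + k) (m + k) (\<lambda>(i, j). (if i < m then 1 else - 1) * N_mat $$ (i, j))"
    using nk by (intro eq_matI) (auto simp: dim eval_pairing_mat_row_basis_p npoly_def N_mat_def)
  also have "det \<dots> = (- 1) ^ k * det N_mat"
    by (rule det_mat_negate_rows_from) (simp add: N_mat_def)
  finally show ?thesis .
qed

lemma modified_hankel_det_ge:
  assumes kn: "k \<le> n" and \<omega>_nonzero: "\<And>j. \<omega> j \<noteq> 0"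
  shows "det (mat n n (\<lambda>(i, j). mod_moment L m x k y (i + j)))
           / fls_const (det (mat (n - k) (n - k) (\<lambda>(i, j). moment L (i + j))))
         = (- 1) powi (int n * (int m - int k) + int k * int m) * det M_mat
           / (fls_const vander_x * vander_y)"
proof -
  let ?G = "det (mat n n (\<lambda>(i, j). mod_moment L m x k y (i + j)))"
  let ?\<Omega> = "fls_const (\<Prod>i<n - k. \<omega> i)"
  have "vander_y * fls_const vander_x * ?G
      = (- 1) ^ ((n - k) * (m + k)) * (?\<Omega> * ((- 1) ^ k * det M_mat))"
    using det_eval_pairing_mat_row_basis_p det_eval_pairing_mat_row_basis_p_ge[OF kn] kn by simp
  moreover have "?\<Omega> \<noteq> 0"
    using \<omega>_nonzero by simp
  ultimately show ?thesis
    unfolding neg_one_powi_exponent_ge[OF kn] hankel_det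
    using vander_x_nonzero vander_y_nonzero by (simp add: field_simps)
qed

lemma modified_hankel_det_lt:
  assumes nk: "n < k"
  shows "det (mat n n (\<lambda>(i, j). mod_moment L m x k y (i + j)))
         = (- 1) powi (int n * (int m - int k) + int k * int m) * det N_mat
           / (fls_const vander_x * vander_y)"
proof -
  let ?G = "det (mat n n (\<lambda>(i, j). mod_moment L m x k y (i + j)))"
  let ?s = "(- 1) ^ (k - n) :: 'a fls"
  have "?s * ?s = 1"
    by (simp flip: power_add)
  then have "vander_y * fls_const vander_x * ?G = vander_y * fls_const vander_x * ?G * ?s * ?s"
    by (simp only: mult.assoc mult_1_right)
  also have "vander_y * fls_const vander_x * ?G * ?s
      = (- 1) ^ ((k - n) * (m + n)) * ((- 1) ^ k * det N_mat)"
    using det_eval_pairing_mat_row_basis_p det_eval_pairing_mat_row_basis_p_lt[OF nk] by simp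
  finally show ?thesis
    unfolding neg_one_powi_exponent_lt[OF nk]
    using vander_x_nonzero vander_y_nonzero by (simp add: field_simps)
qed

end

theorem theorem1:
  fixes L :: "'a::field_char_0 poly \<Rightarrow> 'a"
    and p :: "nat \<Rightarrow> 'a poly"
    and \<omega> :: "nat \<Rightarrow> 'a"
    and k m n :: nat
    and x :: "nat \<Rightarrow> 'a"
    and y :: "nat \<Rightarrow> 'a fls"
  assumes L_add: "\<And>f g. L (f + g) = L f + L g"
    and L_smult: "\<And>c f. L (Polynomial.smult c f) = c * L f"
    and p_monic: "\<And>j. lead_coeff (p j) = 1"
    and p_degree: "\<And>j. degree (p j) = j"
    and p_orth: "\<And>i j. L (p i * p j) = (if i = j then \<omega> j else 0)"
    and \<omega>_nonzero: "\<And>j. \<omega> j \<noteq> 0"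
    and x_distinct: "inj_on x {1..m}"
    and y_distinct: "inj_on y {1..k}"
    and y_large: "\<And>l. l \<in> {1..k} \<Longrightarrow> fls_subdegree (y l) < 0"
  shows
    "(k \<le> n \<longrightarrow>
       det (mat n n (\<lambda>(i, j). mod_moment L m x k y (i + j)))
         / fls_const (det (mat (n - k) (n - k) (\<lambda>(i, j). moment L (i + j))))
       = (- 1) powi (int n * (int m - int k) + int k * int m)
         * det (mat (m + k) (m + k) (\<lambda>(r, c).
              if r < m then fls_const (poly (p (n - k + c)) (x (r + 1)))
              else q_fun L p (n - k + c) (y (r - m + 1))))
         / (fls_const (\<Prod>j\<in>{1..m}. \<Prod>i\<in>{1..<j}. x j - x i)
            * (\<Prod>j\<in>{1..k}. \<Prod>i\<in>{1..<j}. y i - y j)))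
     \<and>
     (n < k \<longrightarrow>
       det (mat n n (\<lambda>(i, j). mod_moment L m x k y (i + j)))
       = (- 1) powi (int n * (int m - int k) + int k * int m)
         * det (mat (m + k) (m + k) (\<lambda>(r, c).
              if r < m then
                (if c < k - n then 0 else fls_const (poly (p (c - (k - n))) (x (r + 1))))
              else
                (if c < k - n then y (r - m + 1) ^ (k - n - 1 - c)
                 else q_fun L p (c - (k - n)) (y (r - m + 1)))))
         / (fls_const (\<Prod>j\<in>{1..m}. \<Prod>i\<in>{1..<j}. x j - x i)
            * (\<Prod>j\<in>{1..k}. \<Prod>i\<in>{1..<j}. y i - y j)))"
proof -
  interpret rational_modification L p \<omega> k m n x y
    by unfold_locales (fact assms)+
  show ?thesis
    using modified_hankel_det_ge[OF _ \<omega>_nonzero] modified_hankel_det_lt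
    unfolding M_mat_def N_mat_def vander_x_def vander_y_def by simp
qed

end
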